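(* Let $n,m,p,N\in\mathbb{N}_+$, $B\in\mathbb{R}^{n\times m}$, $C\in\mathbb{R}^{p\times n}$ of full column rank, $x_0\in\mathbb{R}^n$, $r_1,\dots,r_N\in\mathbb{R}^p$, $r_0:=Cx_0$, $\lambda_1,\lambda_2,\lambda_3\ge0$, functions $f_1,f_2,f_3$, and let $\omega^{\rm c}>0$ and $\mathcal{S}\subseteq\{(A,U,\omega)\in\mathbb{R}^{n\times n}\times\mathbb{R}^{m\times N}\times\mathbb{R}_+:\omega=\omega^{\rm c}\}$. Problem (MOPUL) is: minimize $\lambda_1f_1(A)+\lambda_2f_2(U)+\lambda_3f_3(\omega)$ over $(A,U,\omega)$, $U=(u_0,\dots,u_{N-1})$, subject to $x_t=Ax_{t-1}+Bu_{t-1}$ ($t=1,\dots,N$), $y_t=Cx_t$ ($t=0,\dots,N$), $\sum_{t=1}^N\|y_t-r_t\|_2\le\omega$, $(A,U,\omega)\in\mathcal{S}$. Let $\beta>0$ and consider the modified approximation problem (AMOPUL$_\beta$): minimize the same objective over $(A,U,\omega)$ subject to $\sum_{t=1}^N\|CAC^{\dagger}r_{t-1}+CBu_{t-1}-r_t\|_2\le\omega^{\rm c}/\big(\sum_{i=0}^{N-1}\beta^i\big)$ and $(A,U,\omega)\in\mathcal{S}$. If $\|CA^{\rm a}C^{\dagger}\|_2\le\beta$ for every feasible $A^{\rm a}$ of (AMOPUL$_\beta$), then every feasible solution $(A^{\rm a},U^{\rm a})$ (with $\omega=\omega^{\rm c}$) of (AMOPUL$_\beta$) is feasible for (MOPUL),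 and the optimal objective value of (AMOPUL$_\beta$) is an upper bound for the optimal objective value of (MOPUL).
   Context: $C^{\dagger}$ is the Moore–Penrose inverse of $C$; $\|\cdot\|_2$ is the Euclidean norm for vectors and the spectral norm for matrices. In the paper $f_1,f_2,f_3$ and $\mathcal{S}$ are assumed SD representable, though this is not used in the claim. *)

theory Defs
  imports "HOL-Analysis.Analysis"
begin

definition mp_pinv :: "real^'n^'p \<Rightarrow> real^'p^'n" where
  "mp_pinv C = (THE X. C ** X ** C = C \<and> X ** C ** X = X \<and>
                       transpose (C ** X) = C ** X \<and> transpose (X ** C) = X ** C)"

definition spec_norm :: "real^'n^'m \<Rightarrow> real" where
  "spec_norm M = onorm (\<lambda>x. M *v x)"

primrec traj :: "real^'n^'n \<Rightarrow> real^'m^'n \<Rightarrow> real^'n \<Rightarrow> (nat \<Rightarrow> real^'m) \<Rightarrow> nat \<Rightarrow> real^'n" where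
  "traj A B x0 u 0 = x0"
| "traj A B x0 u (Suc t) = A *v traj A B x0 u t + B *v u t"

definition mopul_feasible ::
  "real^'m^'n \<Rightarrow> real^'n^'p \<Rightarrow> real^'n \<Rightarrow> (nat \<Rightarrow> real^'p) \<Rightarrow> nat \<Rightarrow>
   ((real^'n^'n) \<times> (nat \<Rightarrow> real^'m) \<times> real) set \<Rightarrow>
   ((real^'n^'n) \<times> (nat \<Rightarrow> real^'m) \<times> real) set" where
  "mopul_feasible B C x0 r N S =
     {(A, u, \<omega>). (\<Sum>t=1..N. norm (C *v traj A B x0 u t - r t)) \<le> \<omega> \<and> (A, u, \<omega>) \<in> S}"

definition amopul_feasible ::
  "real^'m^'n \<Rightarrow> real^'n^'p \<Rightarrow> (nat \<Rightarrow> real^'p) \<Rightarrow> nat \<Rightarrow> real \<Rightarrow> real \<Rightarrow>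
   ((real^'n^'n) \<times> (nat \<Rightarrow> real^'m) \<times> real) set \<Rightarrow>
   ((real^'n^'n) \<times> (nat \<Rightarrow> real^'m) \<times> real) set" where
  "amopul_feasible B C r N \<beta> \<omega>c S =
     {(A, u, \<omega>). (\<Sum>t=1..N. norm ((C ** A ** mp_pinv C) *v r (t - 1) + (C ** B) *v u (t - 1) - r t))
                    \<le> \<omega>c / (\<Sum>i<N. \<beta> ^ i) \<and> (A, u, \<omega>) \<in> S}"

end

theory Submission
  imports Defs
begin

text \<open>
  Since \<open>C\<^sup>\<dagger> C = I\<close> for \<open>C\<close> of full column rank, the output error \<open>e\<^sub>t = C x\<^sub>t - r\<^sub>t\<close>
  satisfies \<open>e\<^sub>0 = 0\<close> and \<open>e\<^sub>t = d\<^sub>t + C A C\<^sup>\<dagger> e\<^sub>t\<^sub>-\<^sub>1\<close>, where \<open>d\<^sub>t\<close> is the residual constrained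
  in (AMOPUL\<open>\<^sub>\<beta>\<close>). With \<open>\<parallel>C A C\<^sup>\<dagger>\<parallel> \<le> \<beta>\<close> this gives
  \<open>\<Sum> \<parallel>e\<^sub>t\<parallel> \<le> (\<Sum>\<^sub>i\<^sub><\<^sub>N \<beta>\<^sup>i) \<Sum> \<parallel>d\<^sub>t\<parallel> \<le> \<omega>\<^sup>c\<close>, so the approximate feasible set lies inside
  the original one, and the infimum over the larger set is smaller.
\<close>

lemma Penrose_conditions_unique:
  fixes C :: "real^'n^'p"
  assumes "C ** X ** C = C" "X ** C ** X = X" "transpose (C ** X) = C ** X" "transpose (X ** C) = X ** C"
      and "C ** Y ** C = C" "Y ** C ** Y = Y" "transpose (C ** Y) = C ** Y" "transpose (Y ** C) = Y ** C"
  shows "X = Y"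
proof -
  have CX: "C ** X = C ** Y"
  proof -
    have "C ** X = (C ** Y) ** (C ** X)"
      using assms(5) by (simp add: matrix_mul_assoc)
    also have "\<dots> = transpose ((C ** X) ** (C ** Y))"
      using assms(3,7) by (simp add: matrix_transpose_mul)
    also have "(C ** X) ** (C ** Y) = C ** Y"
      using assms(1) by (simp add: matrix_mul_assoc)
    finally show ?thesis using assms(7) by simp
  qed
  have XC: "X ** C = Y ** C"
  proof -
    have "X ** C = (X ** C) ** (Y ** C)"
      using assms(5) by (metis matrix_mul_assoc)
    also have "\<dots> = transpose ((Y ** C) ** (X ** C))"
      using assms(4,8) by (simp add: matrix_transpose_mul)
    also have "(Y ** C) ** (X ** C) = Y ** C"
      using assms(1) by (metis matrix_mul_assoc)
    finally show ?thesis using assms(8) by simp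
  qed
  have "X = X ** (C ** Y)"
    using assms(2) CX by (metis matrix_mul_assoc)
  also have "\<dots> = Y ** C ** Y"
    using XC by (metis matrix_mul_assoc)
  finally show ?thesis using assms(6) by simp
qed

lemma mp_pinv_eqI:
  fixes C :: "real^'n^'p"
  assumes "C ** X ** C = C" "X ** C ** X = X" "transpose (C ** X) = C ** X" "transpose (X ** C) = X ** C"
  shows "mp_pinv C = X"
  unfolding mp_pinv_def
  using assms by (intro the_equality) (auto intro: Penrose_conditions_unique)

lemma gram_matrix_symmetric_inverse:
  fixes C :: "real^'n^'p"
  assumes "rank C = CARD('n)"
  obtains H where "H ** (transpose C ** C) = mat 1" and "transpose H = H"
proof -
  define G where "G = transpose C ** C"
  have "x = 0" if "G *v x = 0" for x
  proof -
    have "(C *v x) \<bullet> (C *v x) = (G *v x) \<bullet> x"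
      by (simp add: G_def dot_lmul_matrix matrix_vector_mul_assoc[symmetric])
    with that have "C *v x = 0" by simp
    moreover have "inj ((*v) C)" using assms full_rank_injective by blast
    ultimately show "x = 0" by (simp add: inj_on_def)
  qed
  then obtain H where HG: "H ** G = mat 1"
    using matrix_left_invertible_ker by blast
  have GH: "G ** transpose H = mat 1"
    using arg_cong[OF HG, of transpose] by (simp add: G_def matrix_transpose_mul)
  have "transpose H = (H ** G) ** transpose H"
    using HG by simp
  also have "\<dots> = H"
    using GH by (metis matrix_mul_assoc matrix_mul_rid)
  finally have "transpose H = H" .
  with HG show ?thesis using that G_def by blast
qed

text \<open>For full column rank the pseudo-inverse is \<open>(C\<^sup>T C)\<^sup>-\<^sup>1 C\<^sup>T\<close>.\<close>

lemma mp_pinv_left_inverse: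
  fixes C :: "real^'n^'p"
  assumes "rank C = CARD('n)"
  shows "mp_pinv C ** C = mat 1"
proof -
  obtain H where HG: "H ** (transpose C ** C) = mat 1" and Hsym: "transpose H = H"
    using gram_matrix_symmetric_inverse[OF assms] .
  define X where "X = H ** transpose C"
  have XC: "X ** C = mat 1"
    using HG by (simp add: X_def matrix_mul_assoc)
  have "mp_pinv C = X"
  proof (rule mp_pinv_eqI)
    show "C ** X ** C = C" using XC by (metis matrix_mul_assoc matrix_mul_rid)
    show "X ** C ** X = X" using XC by simp
    show "transpose (C ** X) = C ** X"
      using Hsym by (simp add: X_def matrix_transpose_mul matrix_mul_assoc)
    show "transpose (X ** C) = X ** C" using XC by simp
  qed
  with XC show ?thesis by simp
qed

lemma norm_matrix_vector_mul_le_spec_norm: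
  "norm (M *v x) \<le> spec_norm M * norm x"
  unfolding spec_norm_def by (rule onorm) simp

lemma sum_le_geometric_sum_mult_sum:
  fixes a b :: "nat \<Rightarrow> real"
  assumes "a 0 = 0" and "\<And>t. a (Suc t) \<le> b (Suc t) + \<beta> * a t"
    and "\<And>t. b t \<ge> 0" and "\<beta> \<ge> 0"
  shows "(\<Sum>t=1..n. a t) \<le> (\<Sum>i<n. \<beta> ^ i) * (\<Sum>t=1..n. b t)"
proof (induction n)
  case 0
  then show ?case by simp
next
  case (Suc n)
  have "(\<Sum>t=1..Suc n. a t) = (\<Sum>t<Suc n. a (Suc t))"
    by (simp only: One_nat_def sum.atLeast1_atMost_eq)
  also have "\<dots> \<le> (\<Sum>t<Suc n. b (Suc t)) + \<beta> * (\<Sum>t<Suc n. a t)"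
    using sum_mono[of "{..<Suc n}" "\<lambda>t. a (Suc t)" "\<lambda>t. b (Suc t) + \<beta> * a t"] assms(2)
    by (simp only: sum.distrib sum_distrib_left)
  also have "(\<Sum>t<Suc n. a t) = (\<Sum>t=1..n. a t)"
    using assms(1) by (simp add: sum.lessThan_Suc_shift sum.atLeast1_atMost_eq del: sum.lessThan_Suc)
  also have "(\<Sum>t<Suc n. b (Suc t)) = (\<Sum>t=1..Suc n. b t)"
    by (simp only: One_nat_def sum.atLeast1_atMost_eq)
  also have "\<beta> * (\<Sum>t=1..n. a t) \<le> \<beta> * (\<Sum>i<n. \<beta> ^ i) * (\<Sum>t=1..Suc n. b t)"
  proof -
    have "(\<Sum>t=1..n. b t) \<le> (\<Sum>t=1..Suc n. b t)" using assms(3) by simp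
    then have "(\<Sum>t=1..n. a t) \<le> (\<Sum>i<n. \<beta> ^ i) * (\<Sum>t=1..Suc n. b t)"
      using Suc.IH assms(4) by (meson mult_left_mono order_trans sum_nonneg zero_le_power)
    then show ?thesis using assms(4) by (simp add: mult_left_mono mult.assoc)
  qed
  finally show ?case
    by (simp add: sum.lessThan_Suc_shift sum_distrib_left algebra_simps del: sum.lessThan_Suc)
qed

lemma output_error_Suc:
  fixes C :: "real^'n^'p"
  assumes "mp_pinv C ** C = mat 1"
  shows "C *v traj A B x0 u (Suc t) - r (Suc t)
    = ((C ** A ** mp_pinv C) *v r t + (C ** B) *v u t - r (Suc t))
      + (C ** A ** mp_pinv C) *v (C *v traj A B x0 u t - r t)"
proof -
  have "(C ** A ** mp_pinv C) *v (C *v traj A B x0 u t) = (C ** A) *v traj A B x0 u t"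
    using assms by (metis matrix_mul_assoc matrix_mul_rid matrix_vector_mul_assoc)
  then show ?thesis
    by (simp add: matrix_vector_right_distrib matrix_vector_mult_diff_distrib
        matrix_vector_mul_assoc algebra_simps)
qed

lemma output_error_sum_le:
  fixes C :: "real^'n^'p"
  assumes "rank C = CARD('n)" and "r 0 = C *v x0"
    and "spec_norm (C ** A ** mp_pinv C) \<le> \<beta>" and "0 \<le> \<beta>"
  shows "(\<Sum>t=1..N. norm (C *v traj A B x0 u t - r t))
    \<le> (\<Sum>i<N. \<beta> ^ i)
      * (\<Sum>t=1..N. norm ((C ** A ** mp_pinv C) *v r (t - 1) + (C ** B) *v u (t - 1) - r t))"
proof (rule sum_le_geometric_sum_mult_sum)
  fix t
  let ?M = "C ** A ** mp_pinv C" and ?e = "C *v traj A B x0 u t - r t"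
  have "norm (C *v traj A B x0 u (Suc t) - r (Suc t))
      \<le> norm (?M *v r t + (C ** B) *v u t - r (Suc t)) + norm (?M *v ?e)"
    unfolding output_error_Suc[OF mp_pinv_left_inverse[OF assms(1)]] by (rule norm_triangle_ineq)
  also have "norm (?M *v ?e) \<le> \<beta> * norm ?e"
    using norm_matrix_vector_mul_le_spec_norm[of ?M ?e] assms(3)
    by (meson mult_right_mono norm_ge_zero order_trans)
  finally show "norm (C *v traj A B x0 u (Suc t) - r (Suc t))
      \<le> norm (?M *v r (Suc t - 1) + (C ** B) *v u (Suc t - 1) - r (Suc t)) + \<beta> * norm ?e"
    by simp
qed (use assms(2,4) in auto)

lemma amopul_feasible_imp_mopul_feasible:
  fixes C :: "real^'n^'p"
  assumes feasible: "(A, u, \<omega>) \<in> amopul_feasible B C r N \<beta> \<omega>c S"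
    and "rank C = CARD('n)" and "r 0 = C *v x0"
    and "S \<subseteq> {(A, u, \<omega>). \<omega> = \<omega>c}" and "0 \<le> \<omega>c"
    and "0 \<le> \<beta>" and "spec_norm (C ** A ** mp_pinv C) \<le> \<beta>"
  shows "(A, u, \<omega>) \<in> mopul_feasible B C x0 r N S"
proof -
  define G where "G = (\<Sum>i<N. \<beta> ^ i)"
  have "G \<ge> 0"
    using assms(6) by (simp add: G_def sum_nonneg)
  have inS: "(A, u, \<omega>) \<in> S"
    and approx: "(\<Sum>t=1..N. norm ((C ** A ** mp_pinv C) *v r (t - 1) + (C ** B) *v u (t - 1) - r t))
      \<le> \<omega>c / G"
    using feasible by (auto simp: amopul_feasible_def G_def)
  have "(\<Sum>t=1..N. norm (C *v traj A B x0 u t - r t))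
      \<le> G * (\<Sum>t=1..N. norm ((C ** A ** mp_pinv C) *v r (t - 1) + (C ** B) *v u (t - 1) - r t))"
    unfolding G_def using assms(2,3,7,6) by (rule output_error_sum_le)
  also have "\<dots> \<le> G * (\<omega>c / G)"
    using approx \<open>G \<ge> 0\<close> by (rule mult_left_mono)
  also have "\<dots> \<le> \<omega>"
    using inS assms(4,5) by (cases "G = 0") auto
  finally show ?thesis
    using inS by (simp add: mopul_feasible_def)
qed

theorem theorem3:
  fixes B :: "real^'m^'n" and C :: "real^'n^'p" and x0 :: "real^'n"
    and r :: "nat \<Rightarrow> real^'p" and N :: nat
    and lam1 lam2 lam3 \<omega>c \<beta> :: real
    and f1 :: "real^'n^'n \<Rightarrow> real" and f2 :: "(nat \<Rightarrow> real^'m) \<Rightarrow> real" and f3 :: "real \<Rightarrow> real"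
    and S :: "((real^'n^'n) \<times> (nat \<Rightarrow> real^'m) \<times> real) set"
  assumes "N \<ge> 1"
    and "rank C = CARD('n)"
    and "r 0 = C *v x0"
    and "lam1 \<ge> 0" and "lam2 \<ge> 0" and "lam3 \<ge> 0"
    and "\<omega>c > 0"
    and "S \<subseteq> {(A, u, \<omega>). \<omega> > 0 \<and> \<omega> = \<omega>c}"
    and "\<beta> > 0"
    and "\<forall>(A, u, \<omega>) \<in> amopul_feasible B C r N \<beta> \<omega>c S. spec_norm (C ** A ** mp_pinv C) \<le> \<beta>"
  shows "amopul_feasible B C r N \<beta> \<omega>c S \<subseteq> mopul_feasible B C x0 r N S
    \<and> (INF (A, u, \<omega>) \<in> mopul_feasible B C x0 r N S. ereal (lam1 * f1 A + lam2 * f2 u + lam3 * f3 \<omega>))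
      \<le> (INF (A, u, \<omega>) \<in> amopul_feasible B C r N \<beta> \<omega>c S. ereal (lam1 * f1 A + lam2 * f2 u + lam3 * f3 \<omega>))"
proof -
  have subset: "amopul_feasible B C r N \<beta> \<omega>c S \<subseteq> mopul_feasible B C x0 r N S"
  proof (clarify)
    fix A u \<omega>
    assume feasible: "(A, u, \<omega>) \<in> amopul_feasible B C r N \<beta> \<omega>c S"
    with assms(10) have "spec_norm (C ** A ** mp_pinv C) \<le> \<beta>" by auto
    with feasible assms(2,3,7,8,9) show "(A, u, \<omega>) \<in> mopul_feasible B C x0 r N S"
      by (intro amopul_feasible_imp_mopul_feasible) auto
  qed
  then show ?thesis
    by (blast intro: INF_superset_mono)
qed

end
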